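(* Fix $1<p<\infty$. Fix natural numbers $l_1,\dots,l_{d+1}$, let $L=\prod_{i=1}^{d+1}l_i$ and let $T=\bigcup_{i=0}^{d+1}\Lambda_i$ be an $(l_1,\dots,l_{d+1})$ interval tree. Suppose $0<\Delta,\mu<1$, $0<\nu<1$, $\Theta>0$, $M>1$, $m\in\mathbb{N}$, $\lambda>0$, and $(s_I)_{I\in T}\subset(0,\infty)$ are such that (i) for each $I\in T\setminus\Lambda_{d+1}$, $s_I\le\sum_{J^-=I}s_J$; (ii) for all $0\le j\le d$, $\max_{I\in\Lambda_j}s_I\le M\min_{I\in\Lambda_j}s_I$; (iii) $s_{[L]}^p>(1-\nu/2)\frac{\Theta^p}{\lambda^p}\bigl(\prod_{i=1}^{d+1}l_i^{p-1}\bigr)\sum_{I\in\Lambda_{d+1}}s_I^p$; (iv) $(1-\mu\Delta/M^p)^m<(1-\nu/2)\frac{\Theta^p}{\lambda^p}$. For each $0\le j<d$ let $I_j=\{I\in\Lambda_j: s_I^p\le(1-\mu)l_{j+1}^{p-1}\sum_{J^-=I}s_J^p\}$ and let $B=\{j<d:|I_j|\ge\Delta|\Lambda_j|\}$. Then $|B|\le m$.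
   Context: $[n]=\{1,\dots,n\}$. Given natural numbers $l_1,\dots,l_{k}$ with $L=\prod_{j=1}^{k}l_j$, an $(l_1,\dots,l_k)$ interval tree $T=\bigcup_{i=0}^k\Lambda_i$ is built as follows: $\Lambda_0=\{[L]\}$; if $\Lambda_i$ ($i<k$) consists of pairwise disjoint integer subintervals of $[L]$ each of cardinality $\prod_{j=i+1}^k l_j$, then each $I\in\Lambda_i$ is partitioned into $l_{i+1}$ integer subintervals of equal cardinality, and $\Lambda_{i+1}$ is the set of all these subintervals over all $I\in\Lambda_i$. For $0<j\le k$ and $J\in\Lambda_j$, $J^-$ denotes the unique $I\in\Lambda_{j-1}$ with $J\subset I$; sums $\sum_{J^-=I}$ range over the children of $I$. *)

theory Defs
  imports Complex_Main
begin

definition split_interval :: "nat \<Rightarrow> nat set \<Rightarrow> nat set set" where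
  "split_interval n I =
     (\<lambda>t. {Min I + t * (card I div n) ..< Min I + (t + 1) * (card I div n)}) ` {..<n}"

text \<open>Level i of the (l 1, ..., l k) interval tree on [L] = {1..L}, L = l 1 * ... * l k
  (meaningful for i \<le> k).\<close>
primrec Lambda :: "(nat \<Rightarrow> nat) \<Rightarrow> nat \<Rightarrow> nat \<Rightarrow> nat set set" where
  "Lambda l L 0 = {{1..L}}"
| "Lambda l L (Suc i) = (\<Union>I\<in>Lambda l L i. split_interval (l (Suc i)) I)"

text \<open>Children J (with J^- = I) of I \<in> Lambda_j: the elements of Lambda_{j+1} contained in I.\<close>
definition children :: "(nat \<Rightarrow> nat) \<Rightarrow> nat \<Rightarrow> nat \<Rightarrow> nat set \<Rightarrow> nat set set" where
  "children l L j I = {J \<in> Lambda l L (Suc j). J \<subseteq> I}"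

end

theory Submission
  imports Defs "HOL-Analysis.Analysis"
begin

text \<open>
  Let A_j be the sum of s_I^p over the level \<Lambda>_j. By (i) and the power-mean inequality each
  s_I^p is at most l_{j+1}^{p-1} times the sum of s_J^p over its children, hence
  A_j \<le> l_{j+1}^{p-1} A_{j+1}. At a level j \<in> B the deficient nodes lose a further factor
  1 - \<mu>, and by (ii) they carry at least the fraction \<Delta>/M^p of A_j; so there the estimate
  improves to A_j \<le> (1 - \<mu>\<Delta>/M^p) l_{j+1}^{p-1} A_{j+1}. Chaining all levels gives
  s_{[L]}^p = A_0 \<le> (1 - \<mu>\<Delta>/M^p)^{|B|} (\<Prod>i l_i^{p-1}) A_{d+1},
  which contradicts (iii) and (iv) as soon as |B| \<ge> m.
\<close>

lemma powr_sum_le_card_powr_mult_sum_powr: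
  fixes f :: "'a \<Rightarrow> real"
  assumes "finite C" and pos: "\<And>x. x \<in> C \<Longrightarrow> f x > 0" and "p \<ge> 1"
  shows "(\<Sum>x\<in>C. f x) powr p \<le> real (card C) powr (p - 1) * (\<Sum>x\<in>C. f x powr p)"
proof (cases "C = {}")
  case False
  define n where "n = real (card C)"
  have n: "n > 0" using assms False by (simp add: n_def card_gt_0_iff)
  have "(\<Sum>x\<in>C. (1/n) *\<^sub>R f x) powr p \<le> (\<Sum>x\<in>C. (1/n) * f x powr p)"
    using convex_on_sum[OF \<open>finite C\<close> False powr_convex[OF \<open>p \<ge> 1\<close>], of "\<lambda>_. 1/n" f]
    using pos n by (simp add: n_def)
  then have "((\<Sum>x\<in>C. f x) / n) powr p \<le> (\<Sum>x\<in>C. f x powr p) / n"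
    by (simp add: sum_divide_distrib[symmetric] sum_distrib_left[symmetric])
  then have "(\<Sum>x\<in>C. f x) powr p \<le> n powr p * ((\<Sum>x\<in>C. f x powr p) / n)"
    using n pos by (simp add: powr_divide sum_nonneg less_imp_le divide_le_eq mult.commute)
  also have "\<dots> = n powr (p - 1) * (\<Sum>x\<in>C. f x powr p)"
    using n by (simp add: powr_diff)
  finally show ?thesis by (simp add: n_def)
qed simp

lemma powr_le_card_powr_mult_sum_powr:
  fixes f :: "'a \<Rightarrow> real"
  assumes "finite C" "\<And>x. x \<in> C \<Longrightarrow> f x > 0" "p \<ge> 1"
    and "0 \<le> y" "y \<le> (\<Sum>x\<in>C. f x)" "card C \<le> n"
  shows "y powr p \<le> real n powr (p - 1) * (\<Sum>x\<in>C. f x powr p)"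
proof -
  have "y powr p \<le> (\<Sum>x\<in>C. f x) powr p"
    using assms by (intro powr_mono2) auto
  also have "\<dots> \<le> real (card C) powr (p - 1) * (\<Sum>x\<in>C. f x powr p)"
    using assms(1-3) by (rule powr_sum_le_card_powr_mult_sum_powr)
  also have "\<dots> \<le> real n powr (p - 1) * (\<Sum>x\<in>C. f x powr p)"
    using assms by (intro mult_right_mono powr_mono2 sum_nonneg) auto
  finally show ?thesis .
qed

lemma sum_sum_le_sum_of_disjoint_family:
  fixes g :: "'b \<Rightarrow> real"
  assumes "finite A" "finite B" "disjoint_family_on C A" "\<And>a. a \<in> A \<Longrightarrow> C a \<subseteq> B"
    and "\<And>b. b \<in> B \<Longrightarrow> g b \<ge> 0"
  shows "(\<Sum>a\<in>A. \<Sum>b\<in>C a. g b) \<le> (\<Sum>b\<in>B. g b)"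
proof -
  have "finite (C a)" if "a \<in> A" for a
    using assms that by (meson rev_finite_subset)
  then have "(\<Sum>a\<in>A. \<Sum>b\<in>C a. g b) = (\<Sum>b\<in>(\<Union>a\<in>A. C a). g b)"
    using assms by (intro sum.UNION_disjoint[symmetric]) (auto simp: disjoint_family_on_def)
  also have "\<dots> \<le> (\<Sum>b\<in>B. g b)"
    using assms by (intro sum_mono2) auto
  finally show ?thesis .
qed

lemma scaled_sum_le_sum_subset:
  fixes a :: "'a \<Rightarrow> real" and P \<Delta> :: real
  assumes "finite A" "B \<subseteq> A" "\<And>x. x \<in> A \<Longrightarrow> a x \<ge> 0"
    and comparable: "\<And>x y. x \<in> A \<Longrightarrow> y \<in> A \<Longrightarrow> a x \<le> P * a y"
    and many: "\<Delta> * card A \<le> card B"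
  shows "\<Delta> * (\<Sum>x\<in>A. a x) \<le> P * (\<Sum>y\<in>B. a y)"
proof (cases "A = {}")
  case False
  have "card A * (\<Delta> * (\<Sum>x\<in>A. a x)) = (\<Delta> * card A) * (\<Sum>x\<in>A. a x)"
    by simp
  also have "\<dots> \<le> card B * (\<Sum>x\<in>A. a x)"
    using assms by (intro mult_right_mono sum_nonneg) auto
  also have "\<dots> = (\<Sum>y\<in>B. \<Sum>x\<in>A. a x)"
    by simp
  also have "\<dots> \<le> (\<Sum>y\<in>B. \<Sum>x\<in>A. P * a y)"
    using assms by (intro sum_mono) auto
  also have "\<dots> = card A * (P * (\<Sum>y\<in>B. a y))"
    by (simp add: sum_distrib_left)
  finally show ?thesis
    using False \<open>finite A\<close> by (simp add: card_gt_0_iff)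
qed (use assms in simp)

lemma sum_le_of_many_deficient:
  fixes a X :: "'a \<Rightarrow> real" and \<mu> \<Delta> P :: real
  assumes "finite A" and a_nonneg: "\<And>x. x \<in> A \<Longrightarrow> 0 \<le> a x"
    and a_le: "\<And>x. x \<in> A \<Longrightarrow> a x \<le> X x"
    and comparable: "\<And>x y. x \<in> A \<Longrightarrow> y \<in> A \<Longrightarrow> a x \<le> P * a y"
    and many: "\<Delta> * card A \<le> card {x\<in>A. a x \<le> (1 - \<mu>) * X x}"
    and "0 \<le> \<mu>" "\<mu> \<le> 1" "0 \<le> \<Delta>" "\<Delta> \<le> 1" "1 \<le> P"
  shows "(\<Sum>x\<in>A. a x) \<le> (1 - \<mu> * \<Delta> / P) * (\<Sum>x\<in>A. X x)"
proof -
  define B where "B = {x\<in>A. a x \<le> (1 - \<mu>) * X x}"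
  define T where "T = (\<Sum>x\<in>B. X x)"
  have "B \<subseteq> A" "finite B"
    using \<open>finite A\<close> by (auto simp: B_def)
  have "0 \<le> T"
    unfolding T_def using a_nonneg a_le \<open>B \<subseteq> A\<close> by (intro sum_nonneg) force
  have deficient_sum: "(\<Sum>x\<in>B. a x) \<le> (1 - \<mu>) * T"
    unfolding T_def sum_distrib_left by (intro sum_mono) (auto simp: B_def)
  have "(\<Sum>x\<in>A. a x) = (\<Sum>x\<in>B. a x) + (\<Sum>x\<in>A-B. a x)"
    using \<open>finite A\<close> \<open>B \<subseteq> A\<close> by (simp add: sum.subset_diff)
  also have "\<dots> \<le> (1 - \<mu>) * T + (\<Sum>x\<in>A-B. X x)"
    using deficient_sum a_le by (intro add_mono sum_mono) auto
  also have "\<dots> = (\<Sum>x\<in>A. X x) - \<mu> * T"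
    using \<open>finite A\<close> \<open>B \<subseteq> A\<close> by (simp add: sum.subset_diff T_def algebra_simps)
  finally have upper: "(\<Sum>x\<in>A. a x) \<le> (\<Sum>x\<in>A. X x) - \<mu> * T" .
  have "\<Delta> * (\<Sum>x\<in>A. a x) \<le> P * (\<Sum>x\<in>B. a x)"
    using \<open>finite A\<close> \<open>B \<subseteq> A\<close> a_nonneg comparable many
    unfolding B_def by (rule scaled_sum_le_sum_subset)
  also have "\<dots> \<le> P * ((1 - \<mu>) * T)"
    using deficient_sum \<open>1 \<le> P\<close> by simp
  finally have lower: "\<Delta> * (\<Sum>x\<in>A. a x) \<le> P * ((1 - \<mu>) * T)" .
  define c where "c = \<mu> * \<Delta> / P"
  have "c * (\<Sum>x\<in>A. a x) = \<mu> * (\<Delta> * (\<Sum>x\<in>A. a x)) / P"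
    by (simp add: c_def)
  also have "\<dots> \<le> \<mu> * (P * ((1 - \<mu>) * T)) / P"
    using lower \<open>0 \<le> \<mu>\<close> \<open>1 \<le> P\<close> by (intro divide_right_mono mult_left_mono) auto
  also have "\<dots> = \<mu> * ((1 - \<mu>) * T)"
    using \<open>1 \<le> P\<close> by simp
  finally have c_mass: "c * (\<Sum>x\<in>A. a x) \<le> \<mu> * ((1 - \<mu>) * T)" .
  have "c \<le> \<mu>"
    using mult_left_mono[of \<Delta> P \<mu>] assms(6-) by (simp add: c_def divide_le_eq)
  have "(\<Sum>x\<in>A. a x) \<le> (\<Sum>x\<in>A. a x) + \<mu> * T * (\<mu> - c)"
    using \<open>c \<le> \<mu>\<close> \<open>0 \<le> \<mu>\<close> \<open>0 \<le> T\<close> by simp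
  also have "\<dots> \<le> (1 - c) * ((\<Sum>x\<in>A. a x) + \<mu> * T)"
    using c_mass by (simp add: algebra_simps)
  also have "\<dots> \<le> (1 - c) * (\<Sum>x\<in>A. X x)"
    using upper \<open>c \<le> \<mu>\<close> \<open>\<mu> \<le> 1\<close> by (intro mult_left_mono) auto
  finally show ?thesis
    by (simp add: c_def)
qed

lemma telescoping_bound:
  fixes A q :: "nat \<Rightarrow> real" and c :: real
  assumes "0 \<le> c" "\<And>i. 0 \<le> q i"
    and "\<And>j. j < k \<Longrightarrow> A j \<le> q (Suc j) * A (Suc j)"
    and "\<And>j. j < k \<Longrightarrow> G j \<Longrightarrow> A j \<le> c * (q (Suc j) * A (Suc j))"
  shows "A 0 \<le> c ^ card {j. j < k \<and> G j} * (\<Prod>i=1..k. q i) * A k"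
  using assms(3,4)
proof (induction k)
  case (Suc k)
  define w where "w = c ^ card {j. j < k \<and> G j} * (\<Prod>i=1..k. q i)"
  have "0 \<le> w"
    unfolding w_def using assms(1,2) by (simp add: prod_nonneg)
  have prod_Suc: "(\<Prod>i=1..Suc k. q i) = (\<Prod>i=1..k. q i) * q (Suc k)"
    by simp
  have "A 0 \<le> w * A k"
    using Suc by (simp add: w_def)
  also have "\<dots> \<le> w * ((if G k then c else 1) * (q (Suc k) * A (Suc k)))"
    using Suc.prems \<open>0 \<le> w\<close> by (intro mult_left_mono) auto
  also have "\<dots> = c ^ card {j. j < Suc k \<and> G j} * (\<Prod>i=1..Suc k. q i) * A (Suc k)"
  proof (cases "G k")
    case True
    then have "{j. j < Suc k \<and> G j} = insert k {j. j < k \<and> G j}"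
      by (auto simp: less_Suc_eq)
    with True show ?thesis
      unfolding w_def prod_Suc by simp
  next
    case False
    then have "{j. j < Suc k \<and> G j} = {j. j < k \<and> G j}"
      by (auto simp: less_Suc_eq)
    with False show ?thesis
      unfolding w_def prod_Suc by simp
  qed
  finally show ?case .
qed simp

lemma exponent_lt_of_power_mult_bound:
  fixes c K R x :: real
  assumes "0 \<le> c" "c \<le> 1" "0 \<le> R" "x \<le> c ^ n * R" "c ^ m < K" "K * R < x"
  shows "n < m"
proof (rule ccontr)
  assume "\<not> n < m"
  then have "c ^ n * R \<le> c ^ m * R"
    using assms(1-3) by (intro mult_right_mono power_decreasing) auto
  also have "\<dots> \<le> K * R"
    using assms(3,5) by (intro mult_right_mono) auto
  finally show False
    using assms(4,6) by linarith
qed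

lemma le_mult_of_Max_le_mult_Min:
  fixes f :: "'a \<Rightarrow> real"
  assumes "finite A" "x \<in> A" "y \<in> A" "0 \<le> M" "Max (f ` A) \<le> M * Min (f ` A)"
  shows "f x \<le> M * f y"
proof -
  have "f x \<le> Max (f ` A)" "Min (f ` A) \<le> f y"
    using assms(1-3) by auto
  then show ?thesis
    using assms(4,5) by (smt (verit) mult_left_mono)
qed

lemma split_interval_atLeastLessThan:
  "split_interval n {a..<a + n * N} = (\<lambda>t. {a + t * N..<a + (t + 1) * N}) ` {..<n}"
proof (cases "n * N = 0")
  case True
  then show ?thesis
    by (auto simp: split_interval_def)
next
  case False
  then have "Min {a..<a + n * N} = a"
    by (intro Min_eqI) auto
  with False show ?thesis
    by (simp add: split_interval_def)
qed

lemma split_interval_subset: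
  assumes "J \<in> split_interval n {a..<a + n * N}"
  shows "J \<subseteq> {a..<a + n * N}"
proof -
  obtain t where "t < n" "J = {a + t * N..<a + (t + 1) * N}"
    using assms by (auto simp: split_interval_atLeastLessThan)
  moreover have "(t + 1) * N \<le> n * N"
    using mult_le_mono1[of "t + 1" n N] \<open>t < n\<close> by simp
  ultimately show ?thesis
    by auto
qed

lemma split_interval_disjoint:
  "pairwise disjnt (split_interval n {a..<a + n * N})"
proof -
  have piece_disjnt: "disjnt {a + t * N..<a + (t + 1) * N} {a + t' * N..<a + (t' + 1) * N}"
    if "t < t'" for t t'
  proof -
    have "(t + 1) * N \<le> t' * N"
      using mult_le_mono1[of "t + 1" t' N] that by simp
    then show ?thesis
      by (auto simp: disjnt_def)
  qed
  show ?thesis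
    unfolding split_interval_atLeastLessThan pairwise_image
  proof (rule pairwiseI)
    fix t t' :: nat assume "t \<noteq> t'"
    then show "{a + t * N..<a + (t + 1) * N} \<noteq> {a + t' * N..<a + (t' + 1) * N} \<longrightarrow>
        disjnt {a + t * N..<a + (t + 1) * N} {a + t' * N..<a + (t' + 1) * N}"
      using piece_disjnt disjnt_sym by (metis linorder_neqE_nat)
  qed
qed

lemma finite_Lambda: "finite (Lambda l L j)"
  by (induction j) (auto simp: split_interval_def)

definition deficient_nodes ::
    "(nat \<Rightarrow> nat) \<Rightarrow> nat \<Rightarrow> real \<Rightarrow> real \<Rightarrow> (nat set \<Rightarrow> real) \<Rightarrow> nat \<Rightarrow> nat set set" where
  "deficient_nodes l L p \<mu> s j = {I \<in> Lambda l L j.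
     s I powr p \<le> (1 - \<mu>) * real (l (j + 1)) powr (p - 1) * (\<Sum>J\<in>children l L j I. s J powr p)}"

locale interval_tree =
  fixes l :: "nat \<Rightarrow> nat" and k L :: nat
  assumes branching_pos: "\<And>i. i \<in> {1..k} \<Longrightarrow> 1 \<le> l i"
    and L_eq: "L = (\<Prod>i=1..k. l i)"
begin

definition width :: "nat \<Rightarrow> nat" where
  "width j = (\<Prod>i=Suc j..k. l i)"

lemma width_pos: "1 \<le> width j"
  unfolding width_def using branching_pos by (intro prod_ge_1) auto

lemma width_Suc: "j < k \<Longrightarrow> width j = l (Suc j) * width (Suc j)"
  unfolding width_def by (rule prod.atLeast_Suc_atMost) simp

lemma Lambda_interval: "j \<le> k \<Longrightarrow> I \<in> Lambda l L j \<Longrightarrow> \<exists>a. I = {a..<a + width j}"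
proof (induction j arbitrary: I)
  case 0
  then show ?case
    using L_eq by (auto simp: width_def intro!: exI[of _ 1])
next
  case (Suc j)
  obtain I' where I': "I' \<in> Lambda l L j" "I \<in> split_interval (l (Suc j)) I'"
    using Suc.prems by auto
  moreover obtain a where "I' = {a..<a + l (Suc j) * width (Suc j)}"
    using Suc.IH[OF _ I'(1)] Suc.prems width_Suc by auto
  ultimately obtain t where "I = {a + t * width (Suc j)..<a + (t + 1) * width (Suc j)}"
    by (auto simp: split_interval_atLeastLessThan)
  then show ?case
    by (intro exI[of _ "a + t * width (Suc j)"]) (simp add: algebra_simps)
qed

lemma Lambda_interval_Suc:
  "j < k \<Longrightarrow> I \<in> Lambda l L j \<Longrightarrow> \<exists>a. I = {a..<a + l (Suc j) * width (Suc j)}"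
  using Lambda_interval[of j I] width_Suc by simp

lemma Lambda_member_nonempty:
  assumes "j \<le> k" "I \<in> Lambda l L j"
  shows "I \<noteq> {}"
proof -
  obtain a where "I = {a..<a + width j}"
    using Lambda_interval[OF assms] by blast
  moreover have "a < a + width j"
    using width_pos[of j] by linarith
  ultimately show ?thesis
    by (metis atLeastLessThan_iff empty_iff order_refl)
qed

lemma Lambda_disjoint: "j \<le> k \<Longrightarrow> pairwise disjnt (Lambda l L j)"
proof (induction j)
  case (Suc j)
  show ?case
  proof (rule pairwiseI)
    fix J J' assume "J \<in> Lambda l L (Suc j)" "J' \<in> Lambda l L (Suc j)" "J \<noteq> J'"
    then obtain I I' where I: "I \<in> Lambda l L j" "J \<in> split_interval (l (Suc j)) I"
      and I': "I' \<in> Lambda l L j" "J' \<in> split_interval (l (Suc j)) I'"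
      by auto
    obtain a a' where a: "I = {a..<a + l (Suc j) * width (Suc j)}"
      and a': "I' = {a'..<a' + l (Suc j) * width (Suc j)}"
      using Lambda_interval_Suc I(1) I'(1) Suc.prems by (metis Suc_le_lessD)
    show "disjnt J J'"
    proof (cases "I = I'")
      case True
      then show ?thesis
        using I(2) I'(2) \<open>J \<noteq> J'\<close> split_interval_disjoint unfolding a by (auto dest: pairwiseD)
    next
      case False
      then have "disjnt I I'"
        using Suc I(1) I'(1) by (auto dest: pairwiseD)
      moreover have "J \<subseteq> I" "J' \<subseteq> I'"
        using split_interval_subset I(2) I'(2) unfolding a a' by blast+
      ultimately show ?thesis
        by (meson disjnt_subset1 disjnt_subset2)
    qed
  qed
qed simp

lemma children_eq_split_interval:
  assumes "j < k" "I \<in> Lambda l L j"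
  shows "children l L j I = split_interval (l (Suc j)) I"
proof
  show "split_interval (l (Suc j)) I \<subseteq> children l L j I"
    using Lambda_interval_Suc[OF assms] assms(2) split_interval_subset
    by (fastforce simp: children_def)
next
  show "children l L j I \<subseteq> split_interval (l (Suc j)) I"
  proof
    fix J assume "J \<in> children l L j I"
    then have J: "J \<in> Lambda l L (Suc j)" "J \<subseteq> I"
      by (auto simp: children_def)
    then obtain I' where I': "I' \<in> Lambda l L j" "J \<in> split_interval (l (Suc j)) I'"
      by auto
    have "J \<subseteq> I'"
      using Lambda_interval_Suc[OF \<open>j < k\<close> I'(1)] I'(2) split_interval_subset by blast
    moreover have "J \<noteq> {}"
      using Lambda_member_nonempty[OF _ J(1)] \<open>j < k\<close> by simp
    ultimately have "I' = I"
      using J(2) Lambda_disjoint[of j] I'(1) assms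
      by (metis disjnt_iff pairwiseD order.strict_implies_order subset_empty subset_iff)
    with I'(2) show "J \<in> split_interval (l (Suc j)) I"
      by simp
  qed
qed

lemma card_children_le:
  "j < k \<Longrightarrow> I \<in> Lambda l L j \<Longrightarrow> card (children l L j I) \<le> l (Suc j)"
  using card_image_le[of "{..<l (Suc j)}"]
  by (simp add: children_eq_split_interval split_interval_def)

lemma disjoint_family_children:
  assumes "j < k"
  shows "disjoint_family_on (children l L j) (Lambda l L j)"
unfolding disjoint_family_on_def
proof (intro ballI impI)
  fix I I' assume "I \<in> Lambda l L j" "I' \<in> Lambda l L j" "I \<noteq> I'"
  then have "I \<inter> I' = {}"
    using pairwiseD[OF Lambda_disjoint[of j]] assms by (simp add: disjnt_def)
  have False if "J \<in> children l L j I" "J \<in> children l L j I'" for J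
  proof -
    have "J \<subseteq> I \<inter> I'" "J \<in> Lambda l L (Suc j)"
      using that by (auto simp: children_def)
    then show False
      using Lambda_member_nonempty[of "Suc j" J] \<open>I \<inter> I' = {}\<close> assms by simp
  qed
  then show "children l L j I \<inter> children l L j I' = {}"
    by blast
qed

text \<open>Hypothesis (i) says nothing about a node that is already a leaf; such a node
  (possible only if the remaining l_i are 1) is its own unique child.\<close>

lemma leaf_mem_children:
  assumes "j < k" "I \<in> Lambda l L j" "I \<in> Lambda l L k"
  shows "I \<in> children l L j I"
proof -
  obtain a where a: "I = {a..<a + l (Suc j) * width (Suc j)}"
    using Lambda_interval_Suc[OF assms(1,2)] by blast
  have "card I = 1"
    using Lambda_interval[OF order_refl assms(3)] by (auto simp: width_def)
  then have "l (Suc j) = 1"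
    unfolding a by simp
  then show ?thesis
    using children_eq_split_interval[OF assms(1,2)] split_interval_atLeastLessThan[of 1 a]
    unfolding a by simp
qed

lemma sum_children_le_sum_level:
  fixes g :: "nat set \<Rightarrow> real"
  assumes "j < k" "\<And>J. J \<in> Lambda l L (Suc j) \<Longrightarrow> 0 \<le> g J"
  shows "(\<Sum>I\<in>Lambda l L j. \<Sum>J\<in>children l L j I. g J) \<le> (\<Sum>J\<in>Lambda l L (Suc j). g J)"
  using finite_Lambda[of l L j] finite_Lambda[of l L "Suc j"] disjoint_family_children[OF assms(1)] _ assms(2)
  by (rule sum_sum_le_sum_of_disjoint_family) (auto simp: children_def)

lemma powr_le_sum_children_powr:
  assumes "j < k" "1 \<le> p" "I \<in> Lambda l L j" "0 < s I"
    and pos: "\<And>J. J \<in> Lambda l L (Suc j) \<Longrightarrow> 0 < s J"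
    and parent_le: "I \<notin> Lambda l L k \<Longrightarrow> s I \<le> (\<Sum>J\<in>children l L j I. s J)"
  shows "s I powr p \<le> real (l (Suc j)) powr (p - 1) * (\<Sum>J\<in>children l L j I. s J powr p)"
proof -
  have children: "finite (children l L j I)" "\<And>J. J \<in> children l L j I \<Longrightarrow> 0 < s J"
    using finite_Lambda[of l L "Suc j"] pos by (auto simp: children_def intro: rev_finite_subset)
  have "s I \<le> (\<Sum>J\<in>children l L j I. s J)"
  proof (cases "I \<in> Lambda l L k")
    case True
    then have "I \<in> children l L j I"
      using leaf_mem_children assms(1,3) by blast
    then show ?thesis
      using children by (intro member_le_sum) (auto intro: less_imp_le)
  qed (rule parent_le)
  with children show ?thesis
    using card_children_le assms(1-4) by (intro powr_le_card_powr_mult_sum_powr) auto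
qed

lemma sum_level_powr_le:
  assumes "j < k" "1 \<le> p"
    and pos: "\<And>I. I \<in> Lambda l L j \<union> Lambda l L (Suc j) \<Longrightarrow> 0 < s I"
    and parent_le: "\<And>I. I \<in> Lambda l L j \<Longrightarrow> I \<notin> Lambda l L k \<Longrightarrow>
      s I \<le> (\<Sum>J\<in>children l L j I. s J)"
  shows "(\<Sum>I\<in>Lambda l L j. s I powr p)
    \<le> real (l (Suc j)) powr (p - 1) * (\<Sum>J\<in>Lambda l L (Suc j). s J powr p)"
proof -
  have "(\<Sum>I\<in>Lambda l L j. s I powr p)
      \<le> (\<Sum>I\<in>Lambda l L j. real (l (Suc j)) powr (p - 1) * (\<Sum>J\<in>children l L j I. s J powr p))"
    using assms by (intro sum_mono powr_le_sum_children_powr) auto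
  also have "\<dots> \<le> real (l (Suc j)) powr (p - 1) * (\<Sum>J\<in>Lambda l L (Suc j). s J powr p)"
    unfolding sum_distrib_left[symmetric] using assms(1)
    by (intro mult_left_mono sum_children_le_sum_level) auto
  finally show ?thesis .
qed

lemma sum_level_powr_le_if_many_deficient:
  fixes \<mu> \<Delta> M :: real
  assumes "j < k" "1 \<le> p"
    and pos: "\<And>I. I \<in> Lambda l L j \<union> Lambda l L (Suc j) \<Longrightarrow> 0 < s I"
    and parent_le: "\<And>I. I \<in> Lambda l L j \<Longrightarrow> I \<notin> Lambda l L k \<Longrightarrow>
      s I \<le> (\<Sum>J\<in>children l L j I. s J)"
    and comparable: "\<And>I I'. I \<in> Lambda l L j \<Longrightarrow> I' \<in> Lambda l L j \<Longrightarrow> s I \<le> M * s I'"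
    and many: "\<Delta> * card (Lambda l L j) \<le> card (deficient_nodes l L p \<mu> s j)"
    and "0 \<le> \<mu>" "\<mu> \<le> 1" "0 \<le> \<Delta>" "\<Delta> \<le> 1" "1 \<le> M"
  shows "(\<Sum>I\<in>Lambda l L j. s I powr p)
    \<le> (1 - \<mu> * \<Delta> / M powr p) * (real (l (Suc j)) powr (p - 1) * (\<Sum>J\<in>Lambda l L (Suc j). s J powr p))"
proof -
  define q where "q = real (l (Suc j)) powr (p - 1)"
  define X where "X I = q * (\<Sum>J\<in>children l L j I. s J powr p)" for I
  have "1 \<le> M powr p"
    using \<open>1 \<le> M\<close> \<open>1 \<le> p\<close> by (simp add: ge_one_powr_ge_zero)
  have powr_comparable: "s I powr p \<le> M powr p * s I' powr p"
    if "I \<in> Lambda l L j" "I' \<in> Lambda l L j" for I I'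
    using comparable[OF that] pos that \<open>1 \<le> M\<close> \<open>1 \<le> p\<close>
    by (simp add: powr_mult[symmetric] less_imp_le powr_mono2)
  have "(\<Sum>I\<in>Lambda l L j. s I powr p) \<le> (1 - \<mu> * \<Delta> / M powr p) * (\<Sum>I\<in>Lambda l L j. X I)"
  proof (rule sum_le_of_many_deficient[OF finite_Lambda])
    show "s I powr p \<le> X I" if "I \<in> Lambda l L j" for I
      unfolding X_def q_def using assms(1-4) that by (intro powr_le_sum_children_powr) auto
    show "\<Delta> * card (Lambda l L j) \<le> card {I \<in> Lambda l L j. s I powr p \<le> (1 - \<mu>) * X I}"
      using many by (simp add: deficient_nodes_def X_def q_def mult.assoc)
  qed (use powr_comparable \<open>1 \<le> M powr p\<close> assms(7-) in auto)
  also have "\<dots> \<le> (1 - \<mu> * \<Delta> / M powr p) * (q * (\<Sum>J\<in>Lambda l L (Suc j). s J powr p))"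
  proof (rule mult_left_mono)
    show "(\<Sum>I\<in>Lambda l L j. X I) \<le> q * (\<Sum>J\<in>Lambda l L (Suc j). s J powr p)"
      unfolding X_def sum_distrib_left[symmetric] q_def using assms(1)
      by (intro mult_left_mono sum_children_le_sum_level) auto
    have "\<mu> * \<Delta> \<le> M powr p"
      using \<open>1 \<le> M powr p\<close> assms(7-) mult_le_one by fastforce
    then show "0 \<le> 1 - \<mu> * \<Delta> / M powr p"
      using \<open>1 \<le> M powr p\<close> by (simp add: divide_le_eq)
  qed
  finally show ?thesis
    unfolding q_def .
qed

end

theorem lemma3p5:
  fixes p :: real and d :: nat and l :: "nat \<Rightarrow> nat" and L :: nat
    and \<Delta> \<mu> \<nu> \<Theta> M lam :: real and m :: nat and s :: "nat set \<Rightarrow> real"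
  assumes hp: "1 < p"
    and hl: "\<forall>i\<in>{1..d+1}. 1 \<le> l i"
    and hL: "L = (\<Prod>i=1..d+1. l i)"
    and hDelta: "0 < \<Delta>" "\<Delta> < 1"
    and hmu: "0 < \<mu>" "\<mu> < 1"
    and hnu: "0 < \<nu>" "\<nu> < 1"
    and hTheta: "\<Theta> > 0" and hM: "M > 1" and hlam: "lam > 0"
    and hs: "\<forall>j\<le>d+1. \<forall>I\<in>Lambda l L j. s I > 0"
    and i: "\<forall>j\<le>d. \<forall>I\<in>Lambda l L j. I \<notin> Lambda l L (d+1) \<longrightarrow>
              s I \<le> (\<Sum>J\<in>children l L j I. s J)"
    and ii: "\<forall>j\<le>d. Max (s ` Lambda l L j) \<le> M * Min (s ` Lambda l L j)"
    and iii: "s {1..L} powr p > (1 - \<nu>/2) * (\<Theta> powr p / lam powr p)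
               * (\<Prod>i=1..d+1. real (l i) powr (p - 1))
               * (\<Sum>I\<in>Lambda l L (d+1). s I powr p)"
    and iv: "(1 - \<mu> * \<Delta> / M powr p) ^ m < (1 - \<nu>/2) * (\<Theta> powr p / lam powr p)"
  shows "card {j. j < d \<and>
           real (card {I\<in>Lambda l L j. s I powr p \<le>
                 (1 - \<mu>) * real (l (j+1)) powr (p - 1) * (\<Sum>J\<in>children l L j I. s J powr p)})
           \<ge> \<Delta> * real (card (Lambda l L j))} \<le> m"
proof -
  interpret interval_tree l "d + 1" L
    using hl hL by unfold_locales auto
  define A where "A j = (\<Sum>I\<in>Lambda l L j. s I powr p)" for j
  define q where "q i = real (l i) powr (p - 1)" for i
  define c where "c = 1 - \<mu> * \<Delta> / M powr p"
  define B where "B = {j. j < d \<and> \<Delta> * card (Lambda l L j) \<le> card (deficient_nodes l L p \<mu> s j)}"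
  have "1 \<le> M powr p"
    using hM hp by (simp add: ge_one_powr_ge_zero)
  then have c: "0 \<le> c" "c \<le> 1"
    using hmu hDelta mult_le_one[of \<mu> \<Delta>] by (auto simp: c_def divide_le_eq)
  have pos: "0 < s I" if "j < d + 1" "I \<in> Lambda l L j \<union> Lambda l L (Suc j)" for j I
    using hs that Suc_leI less_imp_le by blast
  have "A 0 \<le> c ^ card {j. j < d + 1 \<and> j \<in> B} * (\<Prod>i=1..d+1. q i) * A (d + 1)"
  proof (rule telescoping_bound)
    show "A j \<le> q (Suc j) * A (Suc j)" if "j < d + 1" for j
      unfolding A_def q_def using that hp i pos[OF that(1)] by (intro sum_level_powr_le) auto
    show "A j \<le> c * (q (Suc j) * A (Suc j))" if "j < d + 1" "j \<in> B" for j
      unfolding A_def q_def c_def using that hp i pos[OF that(1)] hmu hDelta hM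
      by (intro sum_level_powr_le_if_many_deficient le_mult_of_Max_le_mult_Min[OF finite_Lambda])
        (auto simp: B_def intro!: ii[rule_format])
  qed (use c in \<open>auto simp: q_def\<close>)
  moreover have "{j. j < d + 1 \<and> j \<in> B} = B"
    by (auto simp: B_def)
  ultimately have telescoped: "A 0 \<le> c ^ card B * ((\<Prod>i=1..d+1. q i) * A (d + 1))"
    by (simp add: mult.assoc)
  have "0 \<le> (\<Prod>i=1..d+1. q i) * A (d + 1)"
    unfolding q_def A_def by (intro mult_nonneg_nonneg prod_nonneg sum_nonneg) auto
  moreover have "(1 - \<nu>/2) * (\<Theta> powr p / lam powr p) * ((\<Prod>i=1..d+1. q i) * A (d + 1)) < A 0"
    using iii by (simp add: A_def q_def mult.assoc)
  ultimately have "card B < m"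
    using exponent_lt_of_power_mult_bound[OF c _ telescoped iv[folded c_def]] by blast
  then show ?thesis
    unfolding B_def deficient_nodes_def by simp
qed

end
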